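(* The sequence of expected probabilities $\mathrm{Prob}(\mathcal{V}\mid\mathcal{E})$ that Peggy deceives Victor by guessing and sending her response before receiving the challenge is indistinguishable from the sequence $$q_\ell=\sum_{h\in\mathbb{Z}_2^{\ell}}\sum_{x\in\mathbb{Z}_2^\ell}2^{-\ell}\,G(h\vdash x\boxplus h)_\ell=\left(\tfrac34\right)^\ell.$$ In particular $\mathrm{Prob}(\mathcal{V}\mid\mathcal{E})$ is negligible.
   Context: Hancke–Kuhn protocol with security parameter $\ell$: shared secret $s$, hash $H$ modeled as a random oracle, counters $a,b$ never reused, token $h=H(s::a::b)=h^{(0)}::h^{(1)}$, Victor's uniformly random challenge $x\in\mathbb{Z}_2^\ell$ (independent of $s,a,b$), correct response $x\boxplus h$ with $(x\boxplus h)_i=h^{(x_i)}_i$. $\mathcal{E}$: the event/run in which Peggy (knowing $s$) sends her response before receiving the challenge. $\mathcal{V}$: Victor observes a satisfactory run (sends $x$ and receives the correct response in time). $G(\Xi\vdash\Theta)$ is the guessing chance (maximal probability over randomized guessing procedures of producing $\Theta$ from $\Xi$). Sequences are indistinguishable if they differ by a negligible function $\nu$ (for every polynomial $q$ with non-negative integer coefficients, $\nu(\ell)<1/q(\ell)$ for large $\ell$). *)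

theory Defs
  imports "HOL-Probability.Probability" "HOL-Computational_Algebra.Polynomial"
begin

text \<open>Bit strings in Z_2^l are modelled as bool lists of length l (True = 1).\<close>

definition bits :: "nat \<Rightarrow> bool list pmf" where
  "bits l = pmf_of_set {xs. length xs = l}"

text \<open>The token h = h0 :: h1, uniformly distributed (random oracle output).\<close>
definition token :: "nat \<Rightarrow> (bool list \<times> bool list) pmf" where
  "token l = pair_pmf (bits l) (bits l)"

definition boxplus :: "bool list \<Rightarrow> bool list \<times> bool list \<Rightarrow> bool list" where
  "boxplus x h = map (\<lambda>i. if x ! i then snd h ! i else fst h ! i) [0..<length x]"

text \<open>Guessing chance G(Xi |- Theta) of producing Theta from Xi, where (Xi,Theta) has joint
  distribution D: maximal success probability over randomized guessing procedures.\<close>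
definition guess_chance :: "('a \<times> 'b) pmf \<Rightarrow> real" where
  "guess_chance D = (SUP f :: 'a \<Rightarrow> 'b pmf.
      measure_pmf.prob (D \<bind> (\<lambda>(\<xi>, \<theta>). map_pmf (\<lambda>y. y = \<theta>) (f \<xi>))) {True})"

definition token_response :: "nat \<Rightarrow> ((bool list \<times> bool list) \<times> bool list) pmf" where
  "token_response l = token l \<bind> (\<lambda>h. bits l \<bind> (\<lambda>x. return_pmf (h, boxplus x h)))"

definition q_seq :: "nat \<Rightarrow> real" where
  "q_seq l = guess_chance (token_response l)"

text \<open>Prob(V | E) for an early-reply strategy S of Peggy: S maps the token h (which Peggy can
  compute from s) to a random response sent before the challenge x is received.\<close>
definition early_success :: "nat \<Rightarrow> (bool list \<times> bool list \<Rightarrow> bool list pmf) \<Rightarrow> real" where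
  "early_success l S = measure_pmf.prob
     (token l \<bind> (\<lambda>h. S h \<bind> (\<lambda>r. bits l \<bind> (\<lambda>x. return_pmf (r = boxplus x h))))) {True}"

definition negligible :: "(nat \<Rightarrow> real) \<Rightarrow> bool" where
  "negligible \<nu> \<longleftrightarrow> (\<forall>q :: nat poly. q \<noteq> 0 \<longrightarrow>
      (\<forall>\<^sub>F l in sequentially. \<nu> l < 1 / real (poly q l)))"

definition indistinguishable :: "(nat \<Rightarrow> real) \<Rightarrow> (nat \<Rightarrow> real) \<Rightarrow> bool" where
  "indistinguishable a b \<longleftrightarrow> negligible (\<lambda>l. \<bar>a l - b l\<bar>)"

end

theory Submission
  imports Defs
begin

text \<open>For a fixed token h = (h0, h1), the response r can equal x \<boxplus> h for at most
  2^k challenges x, where k is the number of positions at which h0 and h1 agree; the response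
  h0 attains this bound. Each position of a uniform token agrees with probability 1/2, so the
  average of 2^k / 2^l is ((2 + 1) / 4)^l = (3/4)^l, which is both the guessing chance and an
  upper bound for every early-reply strategy. A sequence dominated by a geometric sequence with
  ratio below 1 is negligible because polynomials grow subexponentially.\<close>

abbreviation bitstrings :: "nat \<Rightarrow> bool list set" where
  "bitstrings n \<equiv> {xs. length xs = n}"

lemma finite_bitstrings: "finite (bitstrings n)"
  using finite_lists_length_eq[of "UNIV :: bool set" n] by simp

lemma bitstrings_nonempty: "bitstrings n \<noteq> {}"
  by (auto intro: exI[of _ "replicate n False"])

lemma card_bitstrings: "card (bitstrings n) = 2 ^ n"
  using card_lists_length_eq[of "UNIV :: bool set" n] by (simp add: card_UNIV_bool)

lemma sum_bitstrings_Suc: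
  "(\<Sum>x\<in>bitstrings (Suc n). g x) = (\<Sum>xs\<in>bitstrings n. g (True # xs) + g (False # xs))"
proof -
  have bitstrings_Suc: "bitstrings (Suc n) = (\<lambda>(xs, b). b # xs) ` (bitstrings n \<times> UNIV)"
    using lists_length_Suc_eq[of "UNIV :: bool set" n] by simp
  have inj: "inj_on (\<lambda>(xs, b). b # xs) (bitstrings n \<times> (UNIV :: bool set))"
    by (auto simp: inj_on_def)
  have "(\<Sum>x\<in>bitstrings (Suc n). g x) = (\<Sum>(xs, b)\<in>bitstrings n \<times> UNIV. g (b # xs))"
    unfolding bitstrings_Suc by (subst sum.reindex[OF inj]) (simp add: o_def case_prod_unfold)
  also have "\<dots> = (\<Sum>xs\<in>bitstrings n. \<Sum>b\<in>UNIV. g (b # xs))"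
    by (simp add: sum.cartesian_product)
  finally show ?thesis
    by (simp add: UNIV_bool add.commute)
qed

lemma boxplus_eq_Nil_iff [simp]: "boxplus x h = [] \<longleftrightarrow> x = []"
  by (simp add: boxplus_def)

lemma boxplus_Cons [simp]:
  "boxplus (b # x) (a # h0, c # h1) = (if b then c else a) # boxplus x (h0, h1)"
  by (simp add: boxplus_def upt_conv_Cons map_Suc_upt[symmetric] del: upt_Suc)

definition preimage_count :: "nat \<Rightarrow> bool list \<times> bool list \<Rightarrow> bool list \<Rightarrow> real" where
  "preimage_count n h r = (\<Sum>x\<in>bitstrings n. of_bool (boxplus x h = r))"

lemma preimage_count_Suc_Nil: "preimage_count (Suc n) h [] = 0"
  unfolding preimage_count_def by (rule sum.neutral) auto

lemma preimage_count_Suc_Cons: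
  "preimage_count (Suc n) (a # h0, c # h1) (d # r)
     = (of_bool (c = d) + of_bool (a = d)) * preimage_count n (h0, h1) r"
  by (simp add: preimage_count_def sum_bitstrings_Suc sum.distrib sum_distrib_left)

fun agreement_weight :: "bool list \<Rightarrow> bool list \<Rightarrow> real" where
  "agreement_weight (a # h0) (c # h1) = (if a = c then 2 else 1) * agreement_weight h0 h1"
| "agreement_weight _ _ = 1"

lemma agreement_weight_nonneg: "0 \<le> agreement_weight h0 h1"
  by (induction h0 h1 rule: agreement_weight.induct) auto

lemma preimage_count_le_agreement_weight:
  "length h0 = n \<Longrightarrow> length h1 = n \<Longrightarrow> preimage_count n (h0, h1) r \<le> agreement_weight h0 h1"
proof (induction n arbitrary: h0 h1 r)
  case 0
  then show ?case by (simp add: preimage_count_def del: sum_of_bool_eq)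
next
  case (Suc n)
  then obtain a as c cs where h: "h0 = a # as" "h1 = c # cs" "length as = n" "length cs = n"
    by (auto simp: length_Suc_conv)
  show ?case
  proof (cases r)
    case Nil
    then show ?thesis by (simp add: preimage_count_Suc_Nil agreement_weight_nonneg)
  next
    case (Cons d rs)
    have "preimage_count (Suc n) (h0, h1) r
        = (of_bool (c = d) + of_bool (a = d)) * preimage_count n (as, cs) rs"
      by (simp add: h Cons preimage_count_Suc_Cons)
    also have "\<dots> \<le> (if a = c then 2 else 1) * agreement_weight as cs"
      using Suc.IH[OF h(3,4), of rs]
      by (intro mult_mono) (auto simp: preimage_count_def intro: sum_nonneg)
    finally show ?thesis by (simp add: h)
  qed
qed

lemma preimage_count_first_half:
  "length h0 = n \<Longrightarrow> length h1 = n \<Longrightarrow> preimage_count n (h0, h1) h0 = agreement_weight h0 h1"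
proof (induction n arbitrary: h0 h1)
  case 0
  then show ?case by (simp add: preimage_count_def)
next
  case (Suc n)
  then obtain a as c cs where h: "h0 = a # as" "h1 = c # cs" "length as = n" "length cs = n"
    by (auto simp: length_Suc_conv)
  then show ?case
    using Suc.IH[OF h(3,4)] by (simp add: preimage_count_Suc_Cons)
qed

lemma sum_agreement_weight:
  "(\<Sum>h0\<in>bitstrings n. \<Sum>h1\<in>bitstrings n. agreement_weight h0 h1) = 6 ^ n"
proof (induction n)
  case 0
  then show ?case by simp
next
  case (Suc n)
  have "(\<Sum>h0\<in>bitstrings (Suc n). \<Sum>h1\<in>bitstrings (Suc n). agreement_weight h0 h1)
      = 6 * (\<Sum>h0\<in>bitstrings n. \<Sum>h1\<in>bitstrings n. agreement_weight h0 h1)"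
    by (simp add: sum_bitstrings_Suc sum_distrib_left algebra_simps flip: sum.distrib)
  then show ?case using Suc.IH by simp
qed

lemma average_agreement_weight:
  "(\<Sum>h0\<in>bitstrings l. \<Sum>h1\<in>bitstrings l. agreement_weight h0 h1 / 2 ^ l) / 4 ^ l = (3/4) ^ l"
  by (simp add: sum_divide_distrib[symmetric] sum_agreement_weight power_divide[symmetric]
      flip: power_mult_distrib)

lemma pmf_bits_bind: "pmf (bits l \<bind> g) t = (\<Sum>x\<in>bitstrings l. pmf (g x) t) / 2 ^ l"
  by (simp add: bits_def pmf_bind integral_pmf_of_set[OF bitstrings_nonempty finite_bitstrings]
      card_bitstrings)

lemma pmf_token_bind:
  "pmf (token l \<bind> g) t = (\<Sum>h0\<in>bitstrings l. \<Sum>h1\<in>bitstrings l. pmf (g (h0, h1)) t) / 4 ^ l"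
proof -
  have "token l \<bind> g = bits l \<bind> (\<lambda>h0. bits l \<bind> (\<lambda>h1. g (h0, h1)))"
    by (simp add: token_def pair_pmf_def bind_assoc_pmf bind_return_pmf)
  then show ?thesis
    by (simp add: pmf_bits_bind sum_divide_distrib[symmetric] flip: power_mult_distrib)
qed

lemma pmf_challenge_match:
  "pmf (bits l \<bind> (\<lambda>x. return_pmf (r = boxplus x h))) True = preimage_count l h r / 2 ^ l"
  unfolding pmf_bits_bind preimage_count_def
  by (intro arg_cong[where f = "\<lambda>t. t / 2 ^ l"] sum.cong) (auto simp: pmf_return)

lemma pmf_bind_le:
  fixes B :: real
  assumes "\<And>x. x \<in> set_pmf p \<Longrightarrow> pmf (g x) t \<le> B"
  shows "pmf (p \<bind> g) t \<le> B"
proof -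
  have "integrable (measure_pmf p) (\<lambda>x. pmf (g x) t)"
    by (rule measure_pmf.integrable_const_bound[where B = 1]) (auto simp: pmf_le_1)
  then show ?thesis
    unfolding pmf_bind using assms
    by (intro measure_pmf.integral_le_const) (auto simp: AE_measure_pmf_iff)
qed

lemma early_success_eq_pmf:
  "early_success l S
     = pmf (token l \<bind> (\<lambda>h. S h \<bind> (\<lambda>r. bits l \<bind> (\<lambda>x. return_pmf (r = boxplus x h))))) True"
  by (simp add: early_success_def measure_pmf_single)

lemma early_success_le: "early_success l S \<le> (3/4) ^ l"
proof -
  have reply_success_le:
    "pmf (S (h0, h1) \<bind> (\<lambda>r. bits l \<bind> (\<lambda>x. return_pmf (r = boxplus x (h0, h1))))) True
       \<le> agreement_weight h0 h1 / 2 ^ l"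
    if "length h0 = l" "length h1 = l" for h0 h1
    by (rule pmf_bind_le)
      (simp add: pmf_challenge_match divide_right_mono preimage_count_le_agreement_weight that)
  have "early_success l S
      \<le> (\<Sum>h0\<in>bitstrings l. \<Sum>h1\<in>bitstrings l. agreement_weight h0 h1 / 2 ^ l) / 4 ^ l"
    unfolding early_success_eq_pmf pmf_token_bind
    by (intro divide_right_mono sum_mono) (simp_all add: reply_success_le)
  also have "\<dots> = (3/4) ^ l"
    by (rule average_agreement_weight)
  finally show ?thesis .
qed

lemma early_success_first_half: "early_success l (\<lambda>h. return_pmf (fst h)) = (3/4) ^ l"
proof -
  have "early_success l (\<lambda>h. return_pmf (fst h))
      = (\<Sum>h0\<in>bitstrings l. \<Sum>h1\<in>bitstrings l. agreement_weight h0 h1 / 2 ^ l) / 4 ^ l"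
    unfolding early_success_eq_pmf pmf_token_bind
    by (intro arg_cong[where f = "\<lambda>t. t / 4 ^ l"] sum.cong)
      (auto simp: bind_return_pmf pmf_challenge_match preimage_count_first_half)
  also have "\<dots> = (3/4) ^ l"
    by (rule average_agreement_weight)
  finally show ?thesis .
qed

text \<open>Guessing x \<boxplus> h from h is the same experiment as replying early: the response does not
  depend on x, so the challenge may be drawn after it.\<close>

lemma q_seq_eq_SUP_early_success: "q_seq l = (SUP S. early_success l S)"
proof -
  have "token_response l \<bind> (\<lambda>(h, r). map_pmf (\<lambda>y. y = r) (S h))
      = token l \<bind> (\<lambda>h. S h \<bind> (\<lambda>y. bits l \<bind> (\<lambda>x. return_pmf (y = boxplus x h))))" for S
  proof -
    have "token_response l \<bind> (\<lambda>(h, r). map_pmf (\<lambda>y. y = r) (S h))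
        = token l \<bind> (\<lambda>h. bits l \<bind> (\<lambda>x. S h \<bind> (\<lambda>y. return_pmf (y = boxplus x h))))"
      by (simp add: token_response_def bind_assoc_pmf bind_return_pmf map_pmf_def)
    also have "\<dots> = token l \<bind> (\<lambda>h. S h \<bind> (\<lambda>y. bits l \<bind> (\<lambda>x. return_pmf (y = boxplus x h))))"
      by (subst bind_commute_pmf) (rule refl)
    finally show ?thesis .
  qed
  then show ?thesis
    by (simp add: q_seq_def guess_chance_def early_success_def)
qed

lemma q_seq_eq: "q_seq l = (3/4) ^ l"
proof (unfold q_seq_eq_SUP_early_success, rule antisym)
  show "(SUP S. early_success l S) \<le> (3/4) ^ l"
    by (rule cSUP_least) (auto intro: early_success_le)
  have "bdd_above (range (early_success l))"
    by (intro bdd_aboveI2) (rule early_success_le)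
  then show "(3/4) ^ l \<le> (SUP S. early_success l S)"
    using cSUP_upper[OF UNIV_I, of "early_success l" "\<lambda>h. return_pmf (fst h)"]
    by (simp add: early_success_first_half)
qed

lemma tendsto_power_times_geometric:
  fixes c :: real
  assumes "0 \<le> c" "c < 1"
  shows "(\<lambda>n. real n ^ k * c ^ n) \<longlonglongrightarrow> 0"
proof -
  define d where "d = root (Suc k) c"
  have d: "0 \<le> d" "d < 1"
    using assms by (simp_all add: d_def)
  have c: "c = d ^ Suc k"
    unfolding d_def by (rule real_root_pow_pos2[symmetric]) (use assms in auto)
  have "(\<lambda>n. (real n * d ^ n) ^ k * d ^ n) \<longlonglongrightarrow> 0 ^ k * 0"
    using d by (intro tendsto_intros powser_times_n_limit_0) auto
  moreover have "(real n * d ^ n) ^ k * d ^ n = real n ^ k * c ^ n" for n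
    by (simp add: c power_mult_distrib mult.assoc flip: power_mult power_add)
      (simp add: algebra_simps)
  ultimately show ?thesis
    by simp
qed

lemma poly_nat_pos:
  fixes q :: "nat poly"
  assumes "q \<noteq> 0" "0 < l"
  shows "0 < poly q l"
proof -
  have "0 < lead_coeff q * l ^ degree q"
    using assms leading_coeff_neq_0[OF assms(1)] by (simp del: leading_coeff_0_iff)
  also have "\<dots> \<le> poly q l"
    unfolding poly_altdef by (rule member_le_sum) auto
  finally show ?thesis .
qed

lemma negligible_mono:
  assumes "negligible \<mu>" "\<forall>\<^sub>F l in sequentially. \<nu> l \<le> \<mu> l"
  shows "negligible \<nu>"
  unfolding negligible_def
proof (intro allI impI)
  fix q :: "nat poly"
  assume "q \<noteq> 0"
  then have "\<forall>\<^sub>F l in sequentially. \<mu> l < 1 / real (poly q l)"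
    using assms(1) by (simp add: negligible_def)
  with assms(2) show "\<forall>\<^sub>F l in sequentially. \<nu> l < 1 / real (poly q l)"
    by eventually_elim simp
qed

lemma negligible_power:
  fixes c :: real
  assumes "0 \<le> c" "c < 1"
  shows "negligible (\<lambda>l. c ^ l)"
  unfolding negligible_def
proof (intro allI impI)
  fix q :: "nat poly"
  assume q: "q \<noteq> 0"
  have "(\<lambda>l. \<Sum>i\<le>degree q. real (coeff q i) * (real l ^ i * c ^ l))
      \<longlonglongrightarrow> (\<Sum>i\<le>degree q. real (coeff q i) * 0)"
    using assms by (intro tendsto_intros tendsto_power_times_geometric)
  then have "(\<lambda>l. real (poly q l) * c ^ l) \<longlonglongrightarrow> 0"
    by (simp add: poly_altdef sum_distrib_right mult.assoc)
  then have "\<forall>\<^sub>F l in sequentially. real (poly q l) * c ^ l < 1"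
    by (rule order_tendstoD) simp
  with eventually_gt_at_top[of 0]
  show "\<forall>\<^sub>F l in sequentially. c ^ l < 1 / real (poly q l)"
  proof eventually_elim
    case (elim l)
    then show ?case
      using poly_nat_pos[OF q, of l] by (simp add: field_simps)
  qed
qed

theorem proposition6p7:
  fixes P :: "nat \<Rightarrow> bool list \<times> bool list \<Rightarrow> bool list pmf"
  shows "indistinguishable (\<lambda>l. early_success l (P l)) q_seq
       \<and> (\<forall>l. q_seq l = (3/4) ^ l)
       \<and> negligible (\<lambda>l. early_success l (P l))"
proof -
  have geometric: "negligible (\<lambda>l. (3/4 :: real) ^ l)"
    by (rule negligible_power) auto
  have "0 \<le> early_success l (P l)" "early_success l (P l) \<le> (3/4) ^ l" for l
    by (simp add: early_success_def) (rule early_success_le)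
  then show ?thesis
    unfolding indistinguishable_def q_seq_eq
    by (auto intro!: negligible_mono[OF geometric] always_eventually)
qed

end
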